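(* For every $x\in(0,\pi)$ and $\theta>0$, $$\lim_{n\to\infty}\sqrt n\sum_{k\ge1}\frac{\sin^2(kx)}{k^2}\big(1-e^{-\theta k^2/n}\big)=\frac{\sqrt{\pi\theta}}{2}.$$ *)

theory Defs
  imports "HOL-Analysis.Analysis"
begin

end

theory Submission
  imports Defs "HOL-Probability.Distributions"
begin

(* Writing sin\<^sup>2 (k x) = (1 - cos (2 k x)) / 2 splits the series into (F c - T c) / 2 with
   c = \<theta> / n, where F c = \<Sum>k (1 - exp (- c k\<^sup>2)) / k\<^sup>2 and T c is the same series twisted by
   cos (2 k x). By the integral test, F' c = \<Sum>k exp (- c k\<^sup>2) lies within 1 of the Gaussian
   integral sqrt pi / (2 sqrt c); integrating from 0 gives sqrt (pi c) - c \<le> F c \<le> sqrt (pi c).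
   The weights decrease in k and the partial sums of cos (2 k x) are bounded by 1 / sin x, so
   Abel summation gives |T c| \<le> c / sin x. Hence sqrt n times the series is
   sqrt (pi \<theta>) / 2 + O(1 / sqrt n). *)

lemma has_integral_exp_neg_sq_atLeast0:
  fixes c :: real
  assumes "c > 0"
  shows "((\<lambda>t. exp (- c * t\<^sup>2)) has_integral sqrt pi / (2 * sqrt c)) {0..}"
proof -
  let ?g = "\<lambda>t::real. indicator {0..} t *\<^sub>R exp (- t\<^sup>2) :: real"
  have sc: "sqrt c \<noteq> 0" using assms by simp
  have g: "has_bochner_integral lborel ?g (sqrt pi / 2)"
    by (rule gaussian_moment_0)
  then have int: "integrable lborel (\<lambda>t. ?g (0 + sqrt c * t))"
    by (intro lborel_integrable_real_affine[OF _ sc]) (simp add: has_bochner_integral_iff)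
  have "sqrt pi / 2 = \<bar>sqrt c\<bar> *\<^sub>R (\<integral>t. ?g (0 + sqrt c * t) \<partial>lborel)"
    using g lborel_integral_real_affine[OF sc, of ?g 0] by (simp add: has_bochner_integral_iff)
  then have "(\<integral>t. ?g (0 + sqrt c * t) \<partial>lborel) = sqrt pi / (2 * sqrt c)"
    using assms by (simp add: field_simps)
  moreover have "(\<lambda>t. ?g (0 + sqrt c * t)) = (\<lambda>t. if t \<in> {0..} then exp (- c * t\<^sup>2) else 0)"
    using assms by (auto simp: fun_eq_iff indicator_def power_mult_distrib zero_le_mult_iff)
  ultimately have "((\<lambda>t. if t \<in> {0..} then exp (- c * t\<^sup>2) else 0) has_integral sqrt pi / (2 * sqrt c)) UNIV"
    using has_integral_integral_lborel[OF int] by simp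
  then show ?thesis
    using has_integral_restrict_UNIV[of "{0..}" "\<lambda>t. exp (- c * t\<^sup>2)"] by simp
qed

lemma integral_atLeastAtMost_tendsto:
  fixes h :: "real \<Rightarrow> real"
  assumes h: "(h has_integral I) {a..}" and int: "\<And>y. h integrable_on {a..y}"
    and nonneg: "\<And>y. y \<ge> a \<Longrightarrow> h y \<ge> 0"
  shows "(\<lambda>n. integral {a..real n} h) \<longlonglongrightarrow> I"
proof -
  define g where "g n x = (if x \<in> {a..real n} then h x else 0)" for n x
  have g: "(g n has_integral integral {a..real n} h) {a..}" for n
    unfolding g_def by (subst has_integral_restrict) (auto intro: int)
  have "h integrable_on {a..} \<and> (\<lambda>n. integral {a..} (g n)) \<longlonglongrightarrow> integral {a..} h"
  proof (intro monotone_convergence_increasing allI ballI)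
    show "g n integrable_on {a..}" for n using g by blast
    show "g n x \<le> g (Suc n) x" for n x using nonneg by (auto simp: g_def)
  next
    fix x :: real
    have "eventually (\<lambda>n. x \<le> real n) sequentially"
      by (meson eventually_sequentiallyI nat_ceiling_le_eq)
    then have "eventually (\<lambda>n. g n x = h x) sequentially" if "x \<in> {a..}"
      using that by (simp add: g_def eventually_mono)
    then show "x \<in> {a..} \<Longrightarrow> (\<lambda>n. g n x) \<longlonglongrightarrow> h x" by (simp add: tendsto_eventually)
  next
    have "integral {a..real n} h \<le> I" for n
      using has_integral_subset_le[of "{a..real n}" "{a..}" h _ I] h int nonneg by auto
    moreover have "integral {a..real n} h \<ge> 0" for n
      using integral_nonneg[OF int] nonneg by auto
    ultimately have "norm (integral {a..} (g n)) \<le> I" for n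
      using g[THEN integral_unique] by simp
    then show "bounded (range (\<lambda>n. integral {a..} (g n)))"
      by (metis (no_types, lifting) boundedI rangeE)
  qed
  moreover have "integral {a..} (g n) = integral {a..real n} h" for n
    using g by (rule integral_unique)
  ultimately show ?thesis
    using h by (simp add: integral_unique)
qed

context antimono_fun_sum_integral_diff
begin

lemma integrable_on_atLeastAtMost: "f integrable_on {0..y}"
  by (rule integrable_continuous_real) (rule continuous_on_subset[OF cont], auto)

lemma sum_atMost_split_head: "(\<Sum>k\<le>n. f (real k)) = f 0 + (\<Sum>k<n. f (real (Suc k)))"
  unfolding lessThan_Suc_atMost[symmetric] sum.lessThan_Suc_shift by simp

lemma sum_Suc_le_integral:
  assumes "(f has_integral I) {0..}"
  shows "(\<Sum>k<n. f (real (Suc k))) \<le> I"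
proof -
  have "sum_integral_diff_series n \<le> sum_integral_diff_series 0"
    by (rule sum_integral_diff_series_antimono) simp
  moreover have "integral {0..real n} f \<le> I"
    using has_integral_subset_le[of "{0..real n}" "{0..}" f _ I] assms
      integrable_on_atLeastAtMost nonneg by auto
  ultimately show ?thesis
    by (simp add: sum_integral_diff_series_def sum_atMost_split_head)
qed

lemma summable_Suc_of_has_integral:
  assumes "(f has_integral I) {0..}"
  shows "summable (\<lambda>k. f (real (Suc k)))"
proof (rule bounded_imp_summable)
  show "(\<Sum>k\<le>n. f (real (Suc k))) \<le> I" for n
    using sum_Suc_le_integral[OF assms, of "Suc n"] by (simp add: lessThan_Suc_atMost)
qed (simp add: nonneg)

lemma integral_le_suminf_Suc:
  assumes "(f has_integral I) {0..}"
  shows "I \<le> f 0 + (\<Sum>k. f (real (Suc k)))"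
proof (rule LIMSEQ_le)
  show "(\<lambda>n. integral {0..real n} f) \<longlonglongrightarrow> I"
    using assms integrable_on_atLeastAtMost nonneg by (rule integral_atLeastAtMost_tendsto)
  show "(\<lambda>n. f 0 + (\<Sum>k<n. f (real (Suc k)))) \<longlonglongrightarrow> f 0 + (\<Sum>k. f (real (Suc k)))"
    by (intro tendsto_add tendsto_const summable_LIMSEQ summable_Suc_of_has_integral[OF assms])
  show "\<exists>N. \<forall>n\<ge>N. integral {0..real n} f \<le> f 0 + (\<Sum>k<n. f (real (Suc k)))"
    using sum_integral_diff_series_nonneg
    by (auto simp: sum_integral_diff_series_def sum_atMost_split_head)
qed

end

lemma gaussian_sum_bounds:
  fixes c :: real
  assumes "c > 0"
  shows "(\<Sum>k<n. exp (- c * (real (Suc k))\<^sup>2)) \<le> sqrt pi / (2 * sqrt c)"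
    and "summable (\<lambda>k. exp (- c * (real (Suc k))\<^sup>2))"
    and "sqrt pi / (2 * sqrt c) \<le> 1 + (\<Sum>k. exp (- c * (real (Suc k))\<^sup>2))"
proof -
  interpret antimono_fun_sum_integral_diff "\<lambda>t. exp (- c * t\<^sup>2)"
  proof
    show "exp (- c * y\<^sup>2) \<le> exp (- c * x\<^sup>2)" if "0 \<le> x" "x \<le> y" for x y
      using that assms by (simp add: power_mono)
  qed (auto intro!: continuous_intros)
  note I = has_integral_exp_neg_sq_atLeast0[OF assms]
  show "(\<Sum>k<n. exp (- c * (real (Suc k))\<^sup>2)) \<le> sqrt pi / (2 * sqrt c)"
    using sum_Suc_le_integral[OF I] .
  show "summable (\<lambda>k. exp (- c * (real (Suc k))\<^sup>2))"
    using summable_Suc_of_has_integral[OF I] .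
  show "sqrt pi / (2 * sqrt c) \<le> 1 + (\<Sum>k. exp (- c * (real (Suc k))\<^sup>2))"
    using integral_le_suminf_Suc[OF I] by simp
qed

definition heat_weight :: "real \<Rightarrow> nat \<Rightarrow> real" where
  "heat_weight c k = (1 - exp (- c * (real (Suc k))\<^sup>2)) / (real (Suc k))\<^sup>2"

lemma heat_weight_nonneg: "c \<ge> 0 \<Longrightarrow> heat_weight c k \<ge> 0"
  by (simp add: heat_weight_def)

lemma heat_weight_le_inverse_sq: "c \<ge> 0 \<Longrightarrow> heat_weight c k \<le> 1 / (real (Suc k))\<^sup>2"
  by (simp add: heat_weight_def divide_right_mono)

lemma heat_weight_0_le: "heat_weight c 0 \<le> c"
  using exp_ge_add_one_self[of "- c"] by (simp add: heat_weight_def)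

lemma summable_heat_weight:
  assumes "c \<ge> 0"
  shows "summable (heat_weight c)"
proof (rule summable_comparison_test')
  show "summable (\<lambda>k. 1 / (real (Suc k))\<^sup>2)"
    using summable_ignore_initial_segment[OF inverse_power_summable[of 2], of 1]
    by (simp add: divide_inverse)
  show "norm (heat_weight c k) \<le> 1 / (real (Suc k))\<^sup>2" for k
    using assms heat_weight_nonneg heat_weight_le_inverse_sq by simp
qed

lemma has_real_derivative_sum_heat_weight:
  "((\<lambda>c. \<Sum>k<n. heat_weight c k) has_real_derivative (\<Sum>k<n. exp (- c * (real (Suc k))\<^sup>2))) (at c)"
  unfolding heat_weight_def
  by (rule DERIV_sum) (auto intro!: derivative_eq_intros simp: field_simps)

lemma continuous_on_sum_heat_weight: "continuous_on S (\<lambda>c. \<Sum>k<n. heat_weight c k)"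
  unfolding heat_weight_def by (intro continuous_intros) auto

lemma suminf_heat_weight_le:
  assumes "b \<ge> 0"
  shows "(\<Sum>k. heat_weight b k) \<le> sqrt pi * sqrt b"
proof (rule suminf_le_const[OF summable_heat_weight[OF assms]])
  fix n
  let ?f = "\<lambda>c. (\<Sum>k<n. heat_weight c k) - sqrt pi * sqrt c"
  have "?f b \<le> ?f 0"
  proof (rule DERIV_nonpos_imp_decreasing_open[OF assms])
    fix c :: real assume c: "0 < c" "c < b"
    have "(?f has_real_derivative
        (\<Sum>k<n. exp (- c * (real (Suc k))\<^sup>2)) - sqrt pi * (inverse (sqrt c) / 2)) (at c)"
      by (intro DERIV_diff has_real_derivative_sum_heat_weight DERIV_cmult DERIV_real_sqrt c)
    moreover have "(\<Sum>k<n. exp (- c * (real (Suc k))\<^sup>2)) - sqrt pi * (inverse (sqrt c) / 2) \<le> 0"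
      using gaussian_sum_bounds(1)[OF c(1), of n] by (simp add: field_simps)
    ultimately show "\<exists>y. (?f has_real_derivative y) (at c) \<and> y \<le> 0" by blast
  qed (intro continuous_intros continuous_on_sum_heat_weight)
  then show "(\<Sum>k<n. heat_weight b k) \<le> sqrt pi * sqrt b"
    by (simp add: heat_weight_def)
qed

lemma suminf_heat_weight_ge_sqrt_diff:
  assumes a: "0 < a" and ab: "a \<le> b"
  shows "sqrt pi * sqrt b - sqrt pi * sqrt a - (b - a) \<le> (\<Sum>k. heat_weight b k)"
proof -
  define g where "g c k = exp (- c * (real (Suc k))\<^sup>2)" for c k
  \<comment> \<open>For c \<ge> a the Gaussian tails are dominated by those at a; this uniformity is why a > 0.\<close>
  define tail where "tail n = (\<Sum>k. g a (k + n))" for n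
  have g_summable: "summable (g c)" if "c > 0" for c
    unfolding g_def using that by (rule gaussian_sum_bounds(2))
  have tail_le: "(\<Sum>k. g c k) - (\<Sum>k<n. g c k) \<le> tail n" if "a \<le> c" for c n
  proof -
    have "(\<Sum>k. g c k) - (\<Sum>k<n. g c k) = (\<Sum>k. g c (k + n))"
      using suminf_split_initial_segment[OF g_summable, of c n] a that by simp
    also have "\<dots> \<le> tail n"
      unfolding tail_def
    proof (rule suminf_le)
      show "g c (k + n) \<le> g a (k + n)" for k
        using that by (simp add: g_def mult_right_mono)
    qed (use a that g_summable in \<open>simp_all add: summable_iff_shift\<close>)
    finally show ?thesis .
  qed
  have partial: "sqrt pi * sqrt b - sqrt pi * sqrt a - (1 + tail n) * (b - a) \<le> (\<Sum>k<n. heat_weight b k)"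
    for n
  proof -
    let ?f = "\<lambda>c. (\<Sum>k<n. heat_weight c k) - sqrt pi * sqrt c + (1 + tail n) * c"
    have "?f a \<le> ?f b"
    proof (rule DERIV_nonneg_imp_increasing_open[OF ab])
      fix c assume c: "a < c" "c < b"
      then have "c > 0" using a by simp
      have "(?f has_real_derivative
          (\<Sum>k<n. g c k) - sqrt pi * (inverse (sqrt c) / 2) + (1 + tail n) * 1) (at c)"
        unfolding g_def using \<open>c > 0\<close>
        by (intro DERIV_add DERIV_diff has_real_derivative_sum_heat_weight DERIV_cmult
            DERIV_real_sqrt DERIV_ident) simp
      moreover have "(\<Sum>k<n. g c k) - sqrt pi * (inverse (sqrt c) / 2) + (1 + tail n) * 1 \<ge> 0"
      proof -
        have "sqrt pi / (2 * sqrt c) \<le> 1 + (\<Sum>k. g c k)"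
          unfolding g_def using \<open>c > 0\<close> by (rule gaussian_sum_bounds(3))
        moreover have "(\<Sum>k. g c k) - (\<Sum>k<n. g c k) \<le> tail n"
          using c by (intro tail_le) simp
        ultimately show ?thesis by (simp add: field_simps)
      qed
      ultimately show "\<exists>y. (?f has_real_derivative y) (at c) \<and> y \<ge> 0" by blast
    qed (intro continuous_intros continuous_on_sum_heat_weight)
    moreover have "(\<Sum>k<n. heat_weight a k) \<ge> 0"
      using a by (intro sum_nonneg heat_weight_nonneg) simp
    ultimately show ?thesis by (simp add: algebra_simps)
  qed
  have "tail \<longlonglongrightarrow> 0"
    unfolding tail_def using g_summable[OF a] by (rule suminf_exist_split2)
  then have "(\<lambda>n. sqrt pi * sqrt b - sqrt pi * sqrt a - (1 + tail n) * (b - a))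
      \<longlonglongrightarrow> sqrt pi * sqrt b - sqrt pi * sqrt a - (1 + 0) * (b - a)"
    by (intro tendsto_intros)
  moreover have "(\<lambda>n. \<Sum>k<n. heat_weight b k) \<longlonglongrightarrow> (\<Sum>k. heat_weight b k)"
    using a ab by (intro summable_LIMSEQ summable_heat_weight) simp
  ultimately show ?thesis
    using partial by (simp add: LIMSEQ_le)
qed

lemma suminf_heat_weight_ge:
  assumes "b \<ge> 0"
  shows "sqrt pi * sqrt b - b \<le> (\<Sum>k. heat_weight b k)"
proof (cases "b = 0")
  case True
  then show ?thesis by (simp add: heat_weight_def)
next
  case False
  define a where "a n = b / real (Suc n)" for n
  have "a \<longlonglongrightarrow> 0"
    unfolding a_def by (intro LIMSEQ_Suc lim_const_over_n)
  then have "(\<lambda>n. sqrt pi * sqrt b - sqrt pi * sqrt (a n) - (b - a n))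
      \<longlonglongrightarrow> sqrt pi * sqrt b - sqrt pi * sqrt 0 - (b - 0)"
    by (intro tendsto_intros)
  moreover have "sqrt pi * sqrt b - sqrt pi * sqrt (a n) - (b - a n) \<le> (\<Sum>k. heat_weight b k)"
    for n
  proof (rule suminf_heat_weight_ge_sqrt_diff)
    show "0 < a n" "a n \<le> b"
      using assms False by (simp_all add: a_def divide_le_eq)
  qed
  ultimately show ?thesis
    by (simp add: LIMSEQ_le_const2)
qed

lemma sin_times_sum_cos_even_multiples:
  fixes x :: real
  shows "2 * sin x * (\<Sum>j<n. cos (2 * real (Suc j) * x)) = sin ((2 * real n + 1) * x) - sin x"
proof (induction n)
  case (Suc n)
  have "sin ((2 * real (Suc n) + 1) * x) - sin ((2 * real n + 1) * x)
      = sin (2 * real (Suc n) * x + x) - sin (2 * real (Suc n) * x - x)"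
    by (simp add: algebra_simps)
  also have "\<dots> = 2 * sin x * cos (2 * real (Suc n) * x)"
    by (simp add: sin_add sin_diff)
  finally show ?case
    using Suc by (simp add: algebra_simps)
qed simp

lemma abs_sum_cos_even_multiples_le:
  fixes x :: real
  assumes "sin x > 0"
  shows "\<bar>\<Sum>j<n. cos (2 * real (Suc j) * x)\<bar> \<le> 1 / sin x"
proof -
  have "\<bar>2 * sin x * (\<Sum>j<n. cos (2 * real (Suc j) * x))\<bar> \<le> 2"
    unfolding sin_times_sum_cos_even_multiples
    using abs_sin_le_one[of "(2 * real n + 1) * x"] abs_sin_le_one[of x] by linarith
  then have "2 * sin x * \<bar>\<Sum>j<n. cos (2 * real (Suc j) * x)\<bar> \<le> 2"
    using assms by (simp add: abs_mult)
  then show ?thesis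
    using assms by (simp add: field_simps)
qed

lemma abs_sum_mult_antimono_le:
  fixes w b :: "nat \<Rightarrow> real"
  assumes partial_sums: "\<And>n. \<bar>\<Sum>j<n. w j\<bar> \<le> M"
    and antimono: "\<And>k. b (Suc k) \<le> b k" and nonneg: "\<And>k. b k \<ge> 0"
  shows "\<bar>\<Sum>j<n. w j * b j\<bar> \<le> M * b 0"
proof -
  define W where "W n = (\<Sum>j<n. w j)" for n
  have summation_by_parts:
    "(\<Sum>j<n. w j * b j) = W n * b n + (\<Sum>j<n. W (Suc j) * (b j - b (Suc j)))"
    by (induction n) (simp_all add: W_def algebra_simps)
  have "\<bar>W n * b n\<bar> \<le> M * b n"
    using partial_sums[of n] nonneg[of n] by (simp add: W_def abs_mult mult_right_mono)
  moreover have "\<bar>\<Sum>j<n. W (Suc j) * (b j - b (Suc j))\<bar> \<le> (\<Sum>j<n. M * (b j - b (Suc j)))"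
  proof (rule order.trans[OF sum_abs sum_mono])
    show "\<bar>W (Suc j) * (b j - b (Suc j))\<bar> \<le> M * (b j - b (Suc j))" for j
      using partial_sums[of "Suc j"] antimono[of j] by (simp add: W_def abs_mult mult_right_mono)
  qed
  moreover have "(\<Sum>j<n. M * (b j - b (Suc j))) = M * (b 0 - b n)"
    by (simp add: sum_distrib_left[symmetric] sum_lessThan_telescope')
  ultimately show ?thesis
    unfolding summation_by_parts by (simp add: algebra_simps)
qed

lemma one_minus_exp_neg_div_antimono:
  fixes u v :: real
  assumes "0 < u" and "u \<le> v"
  shows "(1 - exp (- v)) / v \<le> (1 - exp (- u)) / u"
proof (rule DERIV_nonpos_imp_nonincreasing[OF \<open>u \<le> v\<close>])
  fix t assume "u \<le> t" "t \<le> v"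
  with assms have "t > 0" by simp
  have "((\<lambda>t. (1 - exp (- t)) / t) has_real_derivative
      (exp (- t) * (1 + t) - 1) / t\<^sup>2) (at t)"
    using \<open>t > 0\<close> by (auto intro!: derivative_eq_intros simp: power2_eq_square field_simps)
  moreover have "exp (- t) * (1 + t) \<le> 1"
    using exp_ge_add_one_self[of t] by (simp add: exp_minus field_simps)
  then have "(exp (- t) * (1 + t) - 1) / t\<^sup>2 \<le> 0"
    by (simp add: divide_nonpos_nonneg)
  ultimately show "\<exists>y. ((\<lambda>t. (1 - exp (- t)) / t) has_real_derivative y) (at t) \<and> y \<le> 0"
    by blast
qed

lemma heat_weight_antimono:
  assumes "c \<ge> 0"
  shows "heat_weight c (Suc k) \<le> heat_weight c k"
proof (cases "c = 0")
  case False
  with assms have "c > 0" by simp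
  have eq: "heat_weight c m = c * ((1 - exp (- (c * (real (Suc m))\<^sup>2))) / (c * (real (Suc m))\<^sup>2))"
    for m
    using \<open>c > 0\<close> by (simp add: heat_weight_def field_simps)
  have "(1 - exp (- (c * (real (Suc (Suc k)))\<^sup>2))) / (c * (real (Suc (Suc k)))\<^sup>2)
      \<le> (1 - exp (- (c * (real (Suc k))\<^sup>2))) / (c * (real (Suc k))\<^sup>2)"
    using \<open>c > 0\<close> by (intro one_minus_exp_neg_div_antimono) (auto intro!: mult_left_mono power_mono)
  then show ?thesis
    unfolding eq using \<open>c > 0\<close> by (intro mult_left_mono) auto
qed (simp add: heat_weight_def)

lemma summable_cos_mult_heat_weight:
  assumes "c \<ge> 0"
  shows "summable (\<lambda>j. cos (f j) * heat_weight c j)"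
proof (rule summable_comparison_test'[OF summable_heat_weight[OF assms]])
  show "norm (cos (f j) * heat_weight c j) \<le> heat_weight c j" for j
    using heat_weight_nonneg[OF assms, of j] abs_cos_le_one[of "f j"]
    by (simp add: abs_mult mult_left_le_one_le)
qed

lemma abs_suminf_cos_mult_heat_weight_le:
  fixes x c :: real
  assumes "sin x > 0" and "c \<ge> 0"
  shows "\<bar>\<Sum>j. cos (2 * real (Suc j) * x) * heat_weight c j\<bar> \<le> c / sin x"
proof -
  let ?w = "\<lambda>j. cos (2 * real (Suc j) * x)"
  have "(\<lambda>n. \<bar>\<Sum>j<n. ?w j * heat_weight c j\<bar>) \<longlonglongrightarrow> \<bar>\<Sum>j. ?w j * heat_weight c j\<bar>"
    using assms(2) by (intro tendsto_rabs summable_LIMSEQ summable_cos_mult_heat_weight)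
  moreover have "\<bar>\<Sum>j<n. ?w j * heat_weight c j\<bar> \<le> 1 / sin x * heat_weight c 0" for n
    using assms by (intro abs_sum_mult_antimono_le abs_sum_cos_even_multiples_le
        heat_weight_antimono heat_weight_nonneg)
  ultimately have "\<bar>\<Sum>j. ?w j * heat_weight c j\<bar> \<le> 1 / sin x * heat_weight c 0"
    by (simp add: LIMSEQ_le_const2)
  also have "\<dots> \<le> c / sin x"
    using assms(1) heat_weight_0_le[of c] by (simp add: divide_right_mono)
  finally show ?thesis .
qed

definition heat_series :: "real \<Rightarrow> real \<Rightarrow> real" where
  "heat_series x c =
    (\<Sum>j. (sin (real (Suc j) * x))\<^sup>2 / (real (Suc j))\<^sup>2 * (1 - exp (- c * (real (Suc j))\<^sup>2)))"

lemma heat_series_eq: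
  assumes "c \<ge> 0"
  shows "heat_series x c
    = (\<Sum>j. heat_weight c j) / 2 - (\<Sum>j. cos (2 * real (Suc j) * x) * heat_weight c j) / 2"
proof -
  let ?w = "\<lambda>j. cos (2 * real (Suc j) * x)"
  have "(sin (real (Suc j) * x))\<^sup>2 / (real (Suc j))\<^sup>2 * (1 - exp (- c * (real (Suc j))\<^sup>2))
      = heat_weight c j / 2 - ?w j * heat_weight c j / 2" for j
  proof -
    have "?w j = 1 - 2 * (sin (real (Suc j) * x))\<^sup>2"
      using cos_double_sin[of "real (Suc j) * x"] by (simp only: mult.assoc)
    then show ?thesis
      unfolding heat_weight_def by (simp only:) (simp add: field_simps)
  qed
  then have "heat_series x c = (\<Sum>j. heat_weight c j / 2 - ?w j * heat_weight c j / 2)"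
    by (simp add: heat_series_def)
  also have "\<dots> = (\<Sum>j. heat_weight c j / 2) - (\<Sum>j. ?w j * heat_weight c j / 2)"
    using assms by (intro suminf_diff[symmetric] summable_divide summable_heat_weight
        summable_cos_mult_heat_weight)
  also have "\<dots> = (\<Sum>j. heat_weight c j) / 2 - (\<Sum>j. ?w j * heat_weight c j) / 2"
    using assms by (simp add: suminf_divide summable_heat_weight summable_cos_mult_heat_weight)
  finally show ?thesis .
qed

lemma heat_series_approx:
  fixes x c :: real
  assumes "sin x > 0" and "c \<ge> 0"
  shows "\<bar>heat_series x c - sqrt pi * sqrt c / 2\<bar> \<le> c * (1 + 1 / sin x) / 2"
proof -
  define F where "F = (\<Sum>j. heat_weight c j)"
  define T where "T = (\<Sum>j. cos (2 * real (Suc j) * x) * heat_weight c j)"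
  have "\<bar>T\<bar> \<le> c / sin x"
    unfolding T_def using assms by (rule abs_suminf_cos_mult_heat_weight_le)
  moreover have "sqrt pi * sqrt c - c \<le> F" and "F \<le> sqrt pi * sqrt c"
    unfolding F_def using assms(2) by (rule suminf_heat_weight_ge, rule suminf_heat_weight_le)
  ultimately have "\<bar>(F - sqrt pi * sqrt c) - T\<bar> \<le> c + c / sin x"
    by (simp add: abs_le_iff)
  moreover have "heat_series x c - sqrt pi * sqrt c / 2 = ((F - sqrt pi * sqrt c) - T) / 2"
    unfolding heat_series_eq[OF assms(2)] F_def T_def by (simp add: field_simps)
  ultimately show ?thesis
    by (simp add: field_simps)
qed

lemma sqrt_mult_heat_series_approx:
  fixes x \<theta> t :: real
  assumes "sin x > 0" and "\<theta> \<ge> 0" and "t > 0"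
  shows "\<bar>sqrt t * heat_series x (\<theta> / t) - sqrt (pi * \<theta>) / 2\<bar>
    \<le> \<theta> * (1 + 1 / sin x) / 2 / sqrt t"
proof -
  have "sqrt (pi * \<theta>) / 2 = sqrt t * (sqrt pi * sqrt (\<theta> / t) / 2)"
    using assms by (simp add: real_sqrt_mult real_sqrt_divide)
  then have "\<bar>sqrt t * heat_series x (\<theta> / t) - sqrt (pi * \<theta>) / 2\<bar>
      = \<bar>sqrt t * (heat_series x (\<theta> / t) - sqrt pi * sqrt (\<theta> / t) / 2)\<bar>"
    by (simp add: right_diff_distrib)
  also have "\<dots> = sqrt t * \<bar>heat_series x (\<theta> / t) - sqrt pi * sqrt (\<theta> / t) / 2\<bar>"
    using assms(3) by (simp add: abs_mult)
  also have "\<dots> \<le> sqrt t * (\<theta> / t * (1 + 1 / sin x) / 2)"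
    using assms by (intro mult_left_mono heat_series_approx) auto
  also have "\<dots> = \<theta> * (1 + 1 / sin x) / 2 * (sqrt t / t)"
    by (simp add: field_simps)
  also have "\<dots> = \<theta> * (1 + 1 / sin x) / 2 / sqrt t"
    unfolding sqrt_divide_self_eq[OF less_imp_le[OF assms(3)]] by (rule divide_inverse[symmetric])
  finally show ?thesis .
qed

theorem lemmaA4:
  fixes x \<theta> :: real
  assumes "0 < x" and "x < pi" and "0 < \<theta>"
  shows "(\<lambda>n::nat. sqrt (real n) *
            (\<Sum>j. (sin (real (Suc j) * x))\<^sup>2 / (real (Suc j))\<^sup>2 *
                   (1 - exp (- \<theta> * (real (Suc j))\<^sup>2 / real n))))
         \<longlonglongrightarrow> sqrt (pi * \<theta>) / 2"
proof -
  define K where "K = \<theta> * (1 + 1 / sin x) / 2"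
  have "sin x > 0"
    using assms by (intro sin_gt_zero) auto
  then have bound: "norm (sqrt (real n) * heat_series x (\<theta> / real n) - sqrt (pi * \<theta>) / 2)
      \<le> K / sqrt (real n)" if "n \<ge> 1" for n
    unfolding K_def real_norm_def using assms(3) that
    by (intro sqrt_mult_heat_series_approx) auto
  have "filterlim (\<lambda>n. sqrt (real n)) at_top sequentially"
    by (rule filterlim_compose[OF sqrt_at_top filterlim_real_sequentially])
  then have "(\<lambda>n. K / sqrt (real n)) \<longlonglongrightarrow> 0"
    by (intro tendsto_divide_0[OF tendsto_const] filterlim_at_top_imp_at_infinity)
  with bound have "(\<lambda>n. sqrt (real n) * heat_series x (\<theta> / real n) - sqrt (pi * \<theta>) / 2)
      \<longlonglongrightarrow> 0"
    by (rule Lim_null_comparison[OF eventually_sequentiallyI[of 1]])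
  then show ?thesis
    unfolding LIM_zero_iff heat_series_def by simp
qed

end
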